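(* Let $k\ge 1$ and let $\mathbf H_k=(h_{i,j})_{1\le i,j\le k}$ be a complex lower Hessenberg matrix, i.e. $h_{i,j}=0$ whenever $j-i>1$. Put $c_{i,j}=h_{i,j}$ if $j\neq i+1$ and $c_{i,i+1}=-h_{i,i+1}$. For $m\in\{0,1,\dots,2^{k-1}-1\}$ and $1\le j\le k$ let $\sigma_{k,j}(m)=j-\zeta_{k,j}(\tau_k(m))$, where $\tau_k$ and $\zeta_{k,j}$ are as defined in the context. Then $$\det(\mathbf H_k)=\sum_{m=0}^{2^{k-1}-1}\ \prod_{j=1}^{k} c_{j,\sigma_{k,j}(m)} .$$
   Context: $\mathfrak R_k$ denotes the set of arrays $r=(r_1,\dots,r_k)$ with $r_i\in\{0,1\}$ for $1\le i\le k-1$ and $r_k=1$. For $m\in\{0,\dots,2^{k-1}-1\}$, $\tau_k(m)=(\lfloor m/2^{k-2}\rfloor \bmod 2,\ \lfloor m/2^{k-3}\rfloor \bmod 2,\dots,\lfloor m/2^{0}\rfloor \bmod 2,\ 1)\in\mathfrak R_k$ (for $k=1$, $\tau_1(0)=(1)$). For $r\in\mathfrak R_k$ and $1\le i\le k$: $\zeta_{k,i}(r)=-1$ if $r_i=0$; if $r_i=1$ and there is an index $l<i$ with $r_l=1$, then $\zeta_{k,i}(r)=i-l-1$ where $l$ is the largest such index (i.e. $\zeta_{k,i}(r)$ is the number of consecutive zeros immediately preceding $r_i$); if $r_i=1$ and $r_l=0$ for all $l<i$, then $\zeta_{k,i}(r)=i-1$. Thus $\sigma_{k,j}(m)=j+1$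 exactly when the $j$-th component of $\tau_k(m)$ is $0$, in which case the factor is $c_{j,j+1}=-h_{j,j+1}$. *)

theory Defs
  imports "Jordan_Normal_Form.Determinant"
begin

text \<open>Arrays r in R_k are represented 1-based as functions nat => nat (only r 1 .. r k matter).\<close>

definition tau :: "nat \<Rightarrow> nat \<Rightarrow> (nat \<Rightarrow> nat)" where
  "tau k m = (\<lambda>i. if i = k then 1 else (m div 2 ^ (k - 1 - i)) mod 2)"

definition zeta :: "nat \<Rightarrow> nat \<Rightarrow> (nat \<Rightarrow> nat) \<Rightarrow> int" where
  "zeta k i r =
     (if r i = 0 then -1
      else if (\<exists>l. 1 \<le> l \<and> l < i \<and> r l = 1)
        then int i - int (GREATEST l. 1 \<le> l \<and> l < i \<and> r l = 1) - 1
      else int i - 1)"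

definition sigma :: "nat \<Rightarrow> nat \<Rightarrow> nat \<Rightarrow> nat" where
  "sigma k j m = nat (int j - zeta k j (tau k m))"

definition hent :: "complex mat \<Rightarrow> nat \<Rightarrow> nat \<Rightarrow> complex" where
  "hent H i j = H $$ (i - 1, j - 1)"

definition cent :: "complex mat \<Rightarrow> nat \<Rightarrow> nat \<Rightarrow> complex" where
  "cent H i j = (if j = i + 1 then - hent H i j else hent H i j)"

end

theory Submission
  imports Defs
begin

text \<open>Expanding a lower Hessenberg determinant along its first row leaves only two terms,
  \<open>h\<^sub>1\<^sub>1\<close> times the minor without column 1 and \<open>-h\<^sub>1\<^sub>2\<close> times the minor without column 2,
  and both minors are again lower Hessenberg. On the other side, the leading bit \<open>r\<^sub>1\<close> of
  \<open>\<tau>\<^sub>k(m)\<close> splits the sum into two halves: it selects the factor \<open>c\<^sub>1\<^sub>1\<close> or \<open>c\<^sub>1\<^sub>2\<close>, the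
  remaining bits are \<open>\<tau>\<^sub>k\<^sub>-\<^sub>1\<close> of the lower bits of \<open>m\<close>, and the remaining indices \<open>\<sigma>\<close> are
  those of \<open>k - 1\<close> renumbered to the columns of the corresponding minor. So both sides
  satisfy the same recurrence in \<open>k\<close>.\<close>

definition det_of_fun :: "nat \<Rightarrow> (nat \<Rightarrow> nat \<Rightarrow> 'a::comm_ring_1) \<Rightarrow> 'a" where
  "det_of_fun n A = det (mat n n (\<lambda>(i, j). A (Suc i) (Suc j)))"

definition minor_fun :: "(nat \<Rightarrow> nat \<Rightarrow> 'a) \<Rightarrow> nat \<Rightarrow> nat \<Rightarrow> nat \<Rightarrow> 'a" where
  "minor_fun A c i j = A (Suc i) (if j < c then j else Suc j)"

definition lower_hessenberg :: "nat \<Rightarrow> (nat \<Rightarrow> nat \<Rightarrow> 'a::zero) \<Rightarrow> bool" where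
  "lower_hessenberg n A \<longleftrightarrow> (\<forall>i\<in>{1..n}. \<forall>j\<in>{1..n}. i + 1 < j \<longrightarrow> A i j = 0)"

lemma lower_hessenberg_minor_fun:
  assumes "lower_hessenberg (Suc n) A" and "c \<le> 2"
  shows "lower_hessenberg n (minor_fun A c)"
  using assms unfolding lower_hessenberg_def minor_fun_def by auto

lemma det_of_fun_1: "det_of_fun 1 A = A 1 1"
  unfolding det_of_fun_def by (subst det_single) auto

lemma det_of_fun_Suc_lower_hessenberg:
  assumes hess: "lower_hessenberg (Suc n) A" and n: "n \<ge> 1"
  shows "det_of_fun (Suc n) A =
    A 1 1 * det_of_fun n (minor_fun A 1) - A 1 2 * det_of_fun n (minor_fun A 2)"
proof -
  define M where "M = mat (Suc n) (Suc n) (\<lambda>(i, j). A (Suc i) (Suc j))"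
  have M: "M \<in> carrier_mat (Suc n) (Suc n)" unfolding M_def by auto
  have "det M = (\<Sum>j<Suc n. M $$ (0, j) * cofactor M 0 j)"
    by (rule laplace_expansion_row[OF M]) simp
  also have "\<dots> = (\<Sum>j\<in>{0, 1}. M $$ (0, j) * cofactor M 0 j)"
  proof (rule sum.mono_neutral_right)
    show "\<forall>j\<in>{..<Suc n} - {0, 1}. M $$ (0, j) * cofactor M 0 j = 0"
      using hess unfolding lower_hessenberg_def M_def by auto
  qed (use n in auto)
  finally have "det M = M $$ (0, 0) * cofactor M 0 0 + M $$ (0, 1) * cofactor M 0 1"
    by simp
  moreover have "mat_delete M 0 c = mat n n (\<lambda>(i, j). minor_fun A (Suc c) (Suc i) (Suc j))"
    if "c \<le> 1" for c
    using that unfolding M_def mat_delete_def minor_fun_def by (intro eq_matI) auto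
  ultimately show ?thesis
    using n unfolding det_of_fun_def M_def[symmetric] cofactor_def
    by (simp add: M_def numeral_2_eq_2)
qed

fun last_one_before :: "(nat \<Rightarrow> nat) \<Rightarrow> nat \<Rightarrow> nat" where
  "last_one_before r 0 = 0"
| "last_one_before r (Suc i) = (if 1 \<le> i \<and> r i = 1 then i else last_one_before r i)"

lemma last_one_before_eq_Greatest:
  "last_one_before r i =
    (if \<exists>l. 1 \<le> l \<and> l < i \<and> r l = 1 then GREATEST l. 1 \<le> l \<and> l < i \<and> r l = 1 else 0)"
proof (induction i)
  case 0
  then show ?case by simp
next
  case (Suc i)
  show ?case
  proof (cases "1 \<le> i \<and> r i = 1")
    case True
    then have "(GREATEST l. 1 \<le> l \<and> l < Suc i \<and> r l = 1) = i"
      by (intro Greatest_equality) auto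
    with True show ?thesis by auto
  next
    case False
    then have "(\<lambda>l. 1 \<le> l \<and> l < Suc i \<and> r l = 1) = (\<lambda>l. 1 \<le> l \<and> l < i \<and> r l = 1)"
      by (auto simp: less_Suc_eq fun_eq_iff)
    with False Suc.IH show ?thesis by (simp only: last_one_before.simps if_False)
  qed
qed

lemma sigma_eq_last_one_before:
  "sigma k j m = (if tau k m j = 0 then Suc j else Suc (last_one_before (tau k m) j))"
  unfolding sigma_def zeta_def last_one_before_eq_Greatest by auto

lemma last_one_before_Suc_shift:
  assumes shift: "\<And>l. 1 \<le> l \<Longrightarrow> l < n \<Longrightarrow> r (Suc l) = r' l"
    and first: "r 1 = b" and b: "b \<le> 1"
    and i: "1 \<le> i" "i \<le> n"
  shows "last_one_before r (Suc i) =
    (if last_one_before r' i = 0 then b else Suc (last_one_before r' i))"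
  using i
proof (induction i rule: dec_induct)
  case base
  then show ?case using first b by (cases b) auto
next
  case (step i)
  then show ?case using shift[of i] by auto
qed

lemma tau_Suc_first:
  assumes "n \<ge> 1" and "m < 2 ^ (n - 1)" and "b \<le> 1"
  shows "tau (Suc n) (b * 2 ^ (n - 1) + m) 1 = b"
  using assms unfolding tau_def by auto

lemma tau_Suc_shift:
  assumes m: "m < 2 ^ (n - 1)" and i: "1 \<le> i" "i \<le> n"
  shows "tau (Suc n) (b * 2 ^ (n - 1) + m) (Suc i) = tau n m i"
proof (cases "i = n")
  case True
  then show ?thesis unfolding tau_def by simp
next
  case False
  define e where "e = n - 1 - i"
  obtain j where j: "i = Suc j" using i by (cases i) auto
  have "n - 1 = Suc j + e" using i False unfolding e_def j by auto
  then have "b * 2 ^ (n - 1) + m = m + (b * 2 ^ j * 2) * 2 ^ e"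
    by (simp add: power_add ac_simps)
  then have "(b * 2 ^ (n - 1) + m) div 2 ^ e = m div 2 ^ e + (b * 2 ^ j) * 2"
    by (simp only: div_mult_self1 power_not_zero zero_neq_numeral not_False_eq_True)
  then have "(b * 2 ^ (n - 1) + m) div 2 ^ e mod 2 = m div 2 ^ e mod 2"
    by (simp only: mod_mult_self1)
  moreover have "Suc n - 1 - Suc i = e" "n - 1 - i = e" unfolding e_def by auto
  ultimately show ?thesis using False i unfolding tau_def by simp
qed

lemma sigma_Suc_first:
  assumes "n \<ge> 1" and "m < 2 ^ (n - 1)" and "b \<le> 1"
  shows "sigma (Suc n) 1 (b * 2 ^ (n - 1) + m) = 2 - b"
  using tau_Suc_first[OF assms] assms(3) unfolding sigma_eq_last_one_before by auto

lemma sigma_Suc_shift: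
  assumes n: "n \<ge> 1" and m: "m < 2 ^ (n - 1)" and b: "b \<le> 1" and i: "1 \<le> i" "i \<le> n"
  shows "sigma (Suc n) (Suc i) (b * 2 ^ (n - 1) + m) =
    (if sigma n i m < 2 - b then sigma n i m else Suc (sigma n i m))"
proof -
  define r where "r = tau (Suc n) (b * 2 ^ (n - 1) + m)"
  define r' where "r' = tau n m"
  have "last_one_before r (Suc i) =
      (if last_one_before r' i = 0 then b else Suc (last_one_before r' i))"
  proof (rule last_one_before_Suc_shift[OF _ _ b i])
    show "r (Suc l) = r' l" if "1 \<le> l" "l < n" for l
      using that unfolding r_def r'_def by (intro tau_Suc_shift[OF m]) auto
    show "r 1 = b" unfolding r_def by (rule tau_Suc_first[OF n m b])
  qed
  moreover have "r (Suc i) = r' i" unfolding r_def r'_def by (rule tau_Suc_shift[OF m i])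
  ultimately show ?thesis
    using i b unfolding sigma_eq_last_one_before r_def[symmetric] r'_def[symmetric] by auto
qed

definition signed_entry :: "(nat \<Rightarrow> nat \<Rightarrow> 'a::uminus) \<Rightarrow> nat \<Rightarrow> nat \<Rightarrow> 'a" where
  "signed_entry A i j = (if j = i + 1 then - A i j else A i j)"

lemma signed_entry_minor_fun:
  assumes "c \<le> 2" and "1 \<le> i"
  shows "signed_entry A (Suc i) (if s < c then s else Suc s) = signed_entry (minor_fun A c) i s"
  using assms unfolding signed_entry_def minor_fun_def by auto

definition hessenberg_sum :: "nat \<Rightarrow> (nat \<Rightarrow> nat \<Rightarrow> 'a::comm_ring_1) \<Rightarrow> 'a" where
  "hessenberg_sum n A = (\<Sum>m<2 ^ (n - 1). \<Prod>j=1..n. signed_entry A j (sigma n j m))"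

lemma hessenberg_sum_1: "hessenberg_sum 1 A = A 1 1"
  unfolding hessenberg_sum_def signed_entry_def sigma_eq_last_one_before tau_def by simp

lemma hessenberg_term_Suc:
  assumes n: "n \<ge> 1" and m: "m < 2 ^ (n - 1)" and b: "b \<le> 1"
  shows "(\<Prod>j=1..Suc n. signed_entry A j (sigma (Suc n) j (b * 2 ^ (n - 1) + m))) =
    signed_entry A 1 (2 - b) * (\<Prod>i=1..n. signed_entry (minor_fun A (2 - b)) i (sigma n i m))"
proof -
  have "(\<Prod>j=1..Suc n. signed_entry A j (sigma (Suc n) j (b * 2 ^ (n - 1) + m))) =
      signed_entry A 1 (sigma (Suc n) 1 (b * 2 ^ (n - 1) + m)) *
      (\<Prod>i=1..n. signed_entry A (Suc i) (sigma (Suc n) (Suc i) (b * 2 ^ (n - 1) + m)))"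
    by (simp add: prod.atLeast_Suc_atMost prod.shift_bounds_cl_Suc_ivl del: prod.cl_ivl_Suc)
  also have "\<dots> = signed_entry A 1 (2 - b) *
      (\<Prod>i=1..n. signed_entry (minor_fun A (2 - b)) i (sigma n i m))"
    using sigma_Suc_first[OF n m b] sigma_Suc_shift[OF n m b]
    by (auto simp: signed_entry_minor_fun intro!: prod.cong)
  finally show ?thesis .
qed

lemma sum_lessThan_add: "(\<Sum>m<a + b::nat. f m) = (\<Sum>m<a. f m) + (\<Sum>m<b. f (a + m))"
  by (induction b) (auto simp: add.assoc)

lemma hessenberg_sum_Suc:
  assumes n: "n \<ge> 1"
  shows "hessenberg_sum (Suc n) A =
    A 1 1 * hessenberg_sum n (minor_fun A 1) - A 1 2 * hessenberg_sum n (minor_fun A 2)"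
proof -
  define N where "N = (2::nat) ^ (n - 1)"
  define term_of where "term_of m = (\<Prod>j=1..Suc n. signed_entry A j (sigma (Suc n) j m))" for m
  have "(2::nat) ^ (Suc n - 1) = N + N" unfolding N_def using n by (cases n) auto
  then have "hessenberg_sum (Suc n) A = (\<Sum>m<N. term_of (0 * N + m)) + (\<Sum>m<N. term_of (1 * N + m))"
    unfolding hessenberg_sum_def term_of_def[symmetric] by (simp add: sum_lessThan_add)
  also have "\<dots> = (\<Sum>m<N. - A 1 2 * (\<Prod>i=1..n. signed_entry (minor_fun A 2) i (sigma n i m)))
      + (\<Sum>m<N. A 1 1 * (\<Prod>i=1..n. signed_entry (minor_fun A 1) i (sigma n i m)))"
    unfolding term_of_def N_def
    using hessenberg_term_Suc[OF n, of _ 0 A] hessenberg_term_Suc[OF n, of _ 1 A]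
    by (simp add: signed_entry_def)
  also have "\<dots> = A 1 1 * hessenberg_sum n (minor_fun A 1) - A 1 2 * hessenberg_sum n (minor_fun A 2)"
    unfolding hessenberg_sum_def N_def[symmetric] sum_distrib_left[symmetric] by simp
  finally show ?thesis .
qed

lemma det_of_fun_eq_hessenberg_sum:
  assumes "n \<ge> 1" and "lower_hessenberg n A"
  shows "det_of_fun n A = hessenberg_sum n A"
  using assms
proof (induction n arbitrary: A rule: dec_induct)
  case base
  show ?case by (simp only: One_nat_def[symmetric] det_of_fun_1 hessenberg_sum_1)
next
  case (step n)
  then show ?case
    by (simp add: det_of_fun_Suc_lower_hessenberg hessenberg_sum_Suc lower_hessenberg_minor_fun)
qed

theorem theorem1:
  fixes k :: nat and H :: "complex mat"
  assumes "k \<ge> 1"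
    and "H \<in> carrier_mat k k"
    and "\<forall>i\<in>{1..k}. \<forall>j\<in>{1..k}. int j - int i > 1 \<longrightarrow> hent H i j = 0"
  shows "det H = (\<Sum>m<2 ^ (k - 1). \<Prod>j=1..k. cent H j (sigma k j m))"
proof -
  have "mat k k (\<lambda>(i, j). hent H (Suc i) (Suc j)) = H"
    using assms(2) unfolding hent_def by (intro eq_matI) auto
  then have "det H = det_of_fun k (hent H)" unfolding det_of_fun_def by simp
  also have "\<dots> = hessenberg_sum k (hent H)"
    using assms(1,3) by (intro det_of_fun_eq_hessenberg_sum) (auto simp: lower_hessenberg_def)
  also have "\<dots> = (\<Sum>m<2 ^ (k - 1). \<Prod>j=1..k. cent H j (sigma k j m))"
    unfolding hessenberg_sum_def cent_def signed_entry_def ..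
  finally show ?thesis .
qed

end
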